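(* Let $h:\mathbb R\to\mathbb R$ be strictly increasing and continuous on $[0,1]$ and $\beta\in(0,1)$ with $\nu_k\le h(\beta^k)$ for all $k\in\mathbb N$ and $\{k:\nu_k>h(0)\}\neq\emptyset$. Let $\omega(s)=\min\{h(1),\max\{s,h(0)\}\}$ and $$V(x)=\sup_{k\in\mathbb N}\beta^{-k}\,h^{-1}_{[0,1]}\big(\omega(\varphi(T^k(x)))\big),\quad x\in\mathbb R^d.$$ Then $V$ is an Opt-Lyapunov function for $(X^{\rm in},T)$ (with $V\circ T\le\beta V$). Moreover the function $\hat h$ defined by $\hat h(s)=s-h(0)$ for $s\le h(0)$ and $\hat h(s)=h^{-1}_{[0,1]}(s)$ for $s\in(h(0),h(1)]$ (extended arbitrarily to $\mathbb R$) is an $(X^{\rm in},T,\varphi)$-certificate of compatibility for $V$; in particular $V$ is $(X^{\rm in},T,\varphi)$-compatible.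
   Context: Standing data: nonempty $X^{\rm in}\subseteq\mathbb R^d$, $T:\mathbb R^d\to\mathbb R^d$, $\varphi:\mathbb R^d\to\mathbb R$ with $\varphi(0)=0$, $\nu_k=\sup_{x\in X^{\rm in}}\varphi(T^k(x))$ finite for all $k$; $G^{>}_\nu=\{k:\nu_k>\limsup_n\nu_n\}$. $h^{-1}_{[0,1]}:[h(0),h(1)]\to[0,1]$ is the inverse of $h|_{[0,1]}$. An Opt-Lyapunov function for $(X^{\rm in},T)$ is $V:\mathbb R^d\to[0,+\infty]$ with $\sup_{X^{\rm in}}V\in(0,1]$ and $V\circ T\le\lambda V$ for some $\lambda\in(0,1)$. $I^\varphi=\overline{\operatorname{conv}}\{\varphi(T^k(x)):k\in\mathbb N,x\in X^{\rm in}\}$. $\mathrm{SC}$: functions $\alpha:\mathbb R\to\mathbb R$ with an interval $I$ such that $\alpha(I)=[0,1]$ and $\alpha$ strictly increasing continuous on $\operatorname{conv}(I^\varphi\cup I)$. An $(X^{\rm in},T,\varphi)$-certificate of compatibility for $g$ is $\alpha\in\mathrm{SC}$ with $\alpha(\nu_k)>0$ for some $k\in G^{>}_\nu$ and $\alpha(\varphi(T^k(x)))\le g(T^k(x))$ for all $k\in\mathbb N$, $x\in X^{\rm in}$. $g$ is $(X^{\rm in},T,\varphi)$-compatible if for some $k\in G^{>}_\nu$ there are $\varepsilon,\eta>0$ with: $x\in X^{\rm in}$, $j\in\mathbb N$, $\varphi(T^j(x))>\nu_k-\eta$ imply $g(T^j(x))>\varepsilon$. *)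

theory Defs
  imports "HOL-Analysis.Analysis"
begin

text \<open>Points of R^d are modelled as elements of real^'n (d = CARD('n)).
  Values in [0,+infinity] are modelled in ereal together with nonnegativity.\<close>

definition nu :: "(real^'n) set \<Rightarrow> (real^'n \<Rightarrow> real^'n) \<Rightarrow> (real^'n \<Rightarrow> real) \<Rightarrow> nat \<Rightarrow> real" where
  "nu X T \<phi> k = (SUP x\<in>X. \<phi> ((T ^^ k) x))"

definition Ggt :: "(real^'n) set \<Rightarrow> (real^'n \<Rightarrow> real^'n) \<Rightarrow> (real^'n \<Rightarrow> real) \<Rightarrow> nat set" where
  "Ggt X T \<phi> = {k. ereal (nu X T \<phi> k) > limsup (\<lambda>n. ereal (nu X T \<phi> n))}"

definition opt_lyapunov :: "(real^'n) set \<Rightarrow> (real^'n \<Rightarrow> real^'n) \<Rightarrow> (real^'n \<Rightarrow> ereal) \<Rightarrow> bool" where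
  "opt_lyapunov X T V \<longleftrightarrow>
     (\<forall>x. 0 \<le> V x) \<and>
     0 < (SUP x\<in>X. V x) \<and> (SUP x\<in>X. V x) \<le> 1 \<and>
     (\<exists>lam::real. 0 < lam \<and> lam < 1 \<and> (\<forall>x. V (T x) \<le> ereal lam * V x))"

definition Iphi :: "(real^'n) set \<Rightarrow> (real^'n \<Rightarrow> real^'n) \<Rightarrow> (real^'n \<Rightarrow> real) \<Rightarrow> real set" where
  "Iphi X T \<phi> = closure (convex hull {\<phi> ((T ^^ k) x) | k x. x \<in> X})"

definition SC :: "(real^'n) set \<Rightarrow> (real^'n \<Rightarrow> real^'n) \<Rightarrow> (real^'n \<Rightarrow> real) \<Rightarrow> (real \<Rightarrow> real) \<Rightarrow> bool" where
  "SC X T \<phi> \<alpha> \<longleftrightarrow> (\<exists>I::real set. is_interval I \<and> \<alpha> ` I = {0..1} \<and>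
       strict_mono_on (convex hull (Iphi X T \<phi> \<union> I)) \<alpha> \<and>
       continuous_on (convex hull (Iphi X T \<phi> \<union> I)) \<alpha>)"

definition certificate :: "(real^'n) set \<Rightarrow> (real^'n \<Rightarrow> real^'n) \<Rightarrow> (real^'n \<Rightarrow> real) \<Rightarrow>
    (real^'n \<Rightarrow> ereal) \<Rightarrow> (real \<Rightarrow> real) \<Rightarrow> bool" where
  "certificate X T \<phi> g \<alpha> \<longleftrightarrow> SC X T \<phi> \<alpha> \<and>
     (\<exists>k\<in>Ggt X T \<phi>. \<alpha> (nu X T \<phi> k) > 0) \<and>
     (\<forall>k x. x \<in> X \<longrightarrow> ereal (\<alpha> (\<phi> ((T ^^ k) x))) \<le> g ((T ^^ k) x))"

definition compatible :: "(real^'n) set \<Rightarrow> (real^'n \<Rightarrow> real^'n) \<Rightarrow> (real^'n \<Rightarrow> real) \<Rightarrow>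
    (real^'n \<Rightarrow> ereal) \<Rightarrow> bool" where
  "compatible X T \<phi> g \<longleftrightarrow> (\<exists>k\<in>Ggt X T \<phi>. \<exists>\<epsilon>>0. \<exists>\<eta>>0.
     \<forall>x\<in>X. \<forall>j. \<phi> ((T ^^ j) x) > nu X T \<phi> k - \<eta> \<longrightarrow> g ((T ^^ j) x) > ereal \<epsilon>)"

definition omega :: "(real \<Rightarrow> real) \<Rightarrow> real \<Rightarrow> real" where
  "omega h s = min (h 1) (max s (h 0))"

definition Vfun :: "(real \<Rightarrow> real) \<Rightarrow> real \<Rightarrow> (real^'n \<Rightarrow> real^'n) \<Rightarrow> (real^'n \<Rightarrow> real) \<Rightarrow> real^'n \<Rightarrow> ereal" where
  "Vfun h \<beta> T \<phi> x = (SUP k::nat. ereal (inverse (\<beta> ^ k) *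
       the_inv_into {0..1} h (omega h (\<phi> ((T ^^ k) x)))))"

end

theory Submission
  imports Defs
begin

text \<open>Each term \<open>inverse (\<beta> ^ k) * h\<inverse>(\<omega>(\<phi>(T\<^sup>k x)))\<close> of the supremum defining \<open>V\<close>
  is at most 1 on \<open>X\<close>, because \<open>\<phi>(T\<^sup>k x) \<le> \<nu>\<^sub>k \<le> h(\<beta>\<^sup>k)\<close> and \<open>h\<inverse>\<close> is increasing;
  shifting the index of the supremum gives \<open>V \<circ> T \<le> \<beta> V\<close>, and a point with
  \<open>\<phi>(T\<^sup>k x) > h 0\<close> makes \<open>V\<close> positive. As \<open>h(\<beta>\<^sup>k) \<longlonglongrightarrow> h 0\<close>, every \<open>k\<close> with \<open>\<nu>\<^sub>k > h 0\<close>
  lies in \<open>Ggt\<close>. The certificate glues \<open>s - h 0\<close> to \<open>h\<inverse>\<close> into a continuous strictly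
  increasing function on \<open>{..h 1}\<close>, a convex set containing \<open>Iphi\<close>, and it lies below \<open>V\<close>
  by the \<open>k = 0\<close> term. Any certificate \<open>\<alpha>\<close> gives compatibility by continuity of \<open>\<alpha>\<close> at
  \<open>\<nu>\<^sub>k \<in> Iphi\<close>.\<close>

context
  fixes h :: "real \<Rightarrow> real" and a b :: real
  assumes ab: "a \<le> b"
    and h_mono: "strict_mono_on {a..b} h"
    and h_cont: "continuous_on {a..b} h"
begin

lemma strict_mono_continuous_image_Icc: "h ` {a..b} = {h a..h b}"
proof
  show "h ` {a..b} \<subseteq> {h a..h b}"
    using strict_mono_on_leD[OF h_mono] by fastforce
  show "{h a..h b} \<subseteq> h ` {a..b}"
  proof
    fix y assume "y \<in> {h a..h b}"
    then obtain x where "a \<le> x" "x \<le> b" "h x = y"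
      using IVT'[of h a y b] ab h_cont by auto
    then show "y \<in> h ` {a..b}" by force
  qed
qed

lemma the_inv_into_Icc_mem: "y \<in> {h a..h b} \<Longrightarrow> the_inv_into {a..b} h y \<in> {a..b}"
  using the_inv_into_into[OF strict_mono_on_imp_inj_on[OF h_mono]]
    strict_mono_continuous_image_Icc by blast

lemma f_the_inv_into_Icc: "y \<in> {h a..h b} \<Longrightarrow> h (the_inv_into {a..b} h y) = y"
  using f_the_inv_into_f[OF strict_mono_on_imp_inj_on[OF h_mono]]
    strict_mono_continuous_image_Icc by blast

lemma strict_mono_on_the_inv_into_Icc: "strict_mono_on {h a..h b} (the_inv_into {a..b} h)"
proof (rule strict_mono_onI, rule ccontr)
  fix y z assume y: "y \<in> {h a..h b}" and z: "z \<in> {h a..h b}" and "y < z"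
    and "\<not> the_inv_into {a..b} h y < the_inv_into {a..b} h z"
  then have "h (the_inv_into {a..b} h z) \<le> h (the_inv_into {a..b} h y)"
    by (intro strict_mono_on_leD[OF h_mono] the_inv_into_Icc_mem) auto
  with \<open>y < z\<close> show False by (simp add: f_the_inv_into_Icc[OF y] f_the_inv_into_Icc[OF z])
qed

lemma continuous_on_the_inv_into_Icc: "continuous_on {h a..h b} (the_inv_into {a..b} h)"
  using continuous_on_inv_into[OF h_cont compact_Icc strict_mono_on_imp_inj_on[OF h_mono]]
  by (simp add: strict_mono_continuous_image_Icc)

end

lemma limsup_le_of_le_tendsto:
  fixes f g :: "nat \<Rightarrow> real"
  assumes "\<And>n. f n \<le> g n" and "g \<longlonglongrightarrow> L"
  shows "limsup (\<lambda>n. ereal (f n)) \<le> ereal L"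
proof -
  have "limsup (\<lambda>n. ereal (f n)) \<le> limsup (\<lambda>n. ereal (g n))"
    using assms(1) by (intro Limsup_mono) auto
  also have "\<dots> = ereal L"
    using assms(2) by (intro lim_imp_Limsup) (auto intro: tendsto_ereal)
  finally show ?thesis .
qed

lemma orbit_value_le_nu:
  "bdd_above ((\<lambda>x. \<phi> ((T ^^ k) x)) ` X) \<Longrightarrow> x \<in> X \<Longrightarrow> \<phi> ((T ^^ k) x) \<le> nu X T \<phi> k"
  unfolding nu_def by (rule cSUP_upper)

lemma nu_mem_Iphi:
  assumes "X \<noteq> {}" and "bdd_above ((\<lambda>x. \<phi> ((T ^^ k) x)) ` X)"
  shows "nu X T \<phi> k \<in> Iphi X T \<phi>"
proof -
  have "nu X T \<phi> k \<in> closure ((\<lambda>x. \<phi> ((T ^^ k) x)) ` X)"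
    unfolding nu_def using assms by (intro closure_contains_Sup) auto
  also have "\<dots> \<subseteq> Iphi X T \<phi>"
    unfolding Iphi_def by (intro closure_mono subset_trans[OF _ hull_subset]) blast
  finally show ?thesis .
qed

lemma orbit_value_mem_Iphi: "x \<in> X \<Longrightarrow> \<phi> ((T ^^ k) x) \<in> Iphi X T \<phi>"
  unfolding Iphi_def by (rule subsetD[OF closure_subset], rule hull_inc) blast

lemma certificate_imp_compatible:
  assumes X_ne: "X \<noteq> {}"
    and bdd: "\<And>k. bdd_above ((\<lambda>x. \<phi> ((T ^^ k) x)) ` X)"
    and cert: "certificate X T \<phi> g \<alpha>"
  shows "compatible X T \<phi> g"
proof -
  obtain k where k: "k \<in> Ggt X T \<phi>" and pos: "\<alpha> (nu X T \<phi> k) > 0"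
    and below: "\<And>j x. x \<in> X \<Longrightarrow> ereal (\<alpha> (\<phi> ((T ^^ j) x))) \<le> g ((T ^^ j) x)"
    using cert unfolding certificate_def by blast
  from cert obtain I where mono: "strict_mono_on (convex hull (Iphi X T \<phi> \<union> I)) \<alpha>"
    and cont: "continuous_on (convex hull (Iphi X T \<phi> \<union> I)) \<alpha>"
    unfolding certificate_def SC_def by blast
  define D where "D = convex hull (Iphi X T \<phi> \<union> I)"
  define \<nu> where "\<nu> = nu X T \<phi> k"
  have Iphi_D: "Iphi X T \<phi> \<subseteq> D" unfolding D_def by (rule subset_trans[OF _ hull_subset]) blast
  have \<nu>_D: "\<nu> \<in> D" using nu_mem_Iphi[OF X_ne bdd] Iphi_D unfolding \<nu>_def by blast
  obtain \<eta> where \<eta>: "\<eta> > 0" and near: "\<And>s. s \<in> D \<Longrightarrow> dist s \<nu> < \<eta> \<Longrightarrow> dist (\<alpha> s) (\<alpha> \<nu>) < \<alpha> \<nu> / 2"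
    using cont \<nu>_D pos unfolding continuous_on_iff D_def[symmetric] \<nu>_def[symmetric]
    by (metis half_gt_zero)
  have "g ((T ^^ j) x) > ereal (\<alpha> \<nu> / 2)" if x: "x \<in> X" and gt: "\<phi> ((T ^^ j) x) > \<nu> - \<eta>" for x j
  proof -
    define s where "s = \<phi> ((T ^^ j) x)"
    have s_D: "s \<in> D" unfolding s_def using orbit_value_mem_Iphi[OF x] Iphi_D by blast
    have "\<alpha> s > \<alpha> \<nu> / 2"
    proof (cases "s \<le> \<nu>")
      case True
      with gt have "dist s \<nu> < \<eta>" unfolding s_def dist_real_def by linarith
      with near[OF s_D] show ?thesis unfolding dist_real_def by arith
    next
      case False
      then have "\<alpha> \<nu> < \<alpha> s" using mono s_D \<nu>_D unfolding D_def[symmetric] by (simp add: strict_mono_on_less)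
      with pos show ?thesis unfolding \<nu>_def by linarith
    qed
    then have "ereal (\<alpha> \<nu> / 2) < ereal (\<alpha> s)" by simp
    also have "\<dots> \<le> g ((T ^^ j) x)" unfolding s_def by (rule below[OF x])
    finally show ?thesis .
  qed
  then show ?thesis
    unfolding compatible_def using k pos \<eta> by (intro bexI[OF _ k] exI[of _ "\<alpha> \<nu> / 2"] exI[of _ \<eta>])
      (auto simp: \<nu>_def)
qed

lemma Iphi_subset_atMost:
  assumes "\<And>k x. x \<in> X \<Longrightarrow> \<phi> ((T ^^ k) x) \<le> c"
  shows "Iphi X T \<phi> \<subseteq> {..c}"
  unfolding Iphi_def using assms
  by (intro closure_minimal hull_minimal) (auto intro: convex_real_interval)

lemma omega_mem: "h 0 \<le> h 1 \<Longrightarrow> omega h s \<in> {h 0..h 1}"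
  by (auto simp: omega_def)

lemma omega_eq_self: "s \<in> {h 0..h 1} \<Longrightarrow> omega h s = s"
  by (auto simp: omega_def)

lemma Vfun_ge_term:
  "ereal (inverse (\<beta> ^ k) * the_inv_into {0..1} h (omega h (\<phi> ((T ^^ k) x)))) \<le> Vfun h \<beta> T \<phi> x"
  unfolding Vfun_def by (rule SUP_upper) simp

lemma Vfun_comp_le:
  assumes "0 < \<beta>"
  shows "Vfun h \<beta> T \<phi> (T x) \<le> ereal \<beta> * Vfun h \<beta> T \<phi> x"
  unfolding Vfun_def[of h \<beta> T \<phi> "T x"]
proof (rule SUP_least)
  fix k :: nat
  let ?term = "\<lambda>k. inverse (\<beta> ^ k) * the_inv_into {0..1} h (omega h (\<phi> ((T ^^ k) x)))"
  have "(T ^^ k) (T x) = (T ^^ Suc k) x"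
    by (simp only: funpow_Suc_right comp_def)
  moreover have "inverse (\<beta> ^ k) = \<beta> * inverse (\<beta> ^ Suc k)"
    using assms by (simp add: field_simps)
  ultimately have "ereal (inverse (\<beta> ^ k) * the_inv_into {0..1} h (omega h (\<phi> ((T ^^ k) (T x)))))
      = ereal \<beta> * ereal (?term (Suc k))"
    by (simp only: times_ereal.simps mult.assoc)
  also have "\<dots> \<le> ereal \<beta> * Vfun h \<beta> T \<phi> x"
    using assms by (intro ereal_mult_left_mono Vfun_ge_term) auto
  finally show "ereal (inverse (\<beta> ^ k) * the_inv_into {0..1} h (omega h (\<phi> ((T ^^ k) (T x)))))
      \<le> ereal \<beta> * Vfun h \<beta> T \<phi> x" .
qed

context
  fixes h :: "real \<Rightarrow> real"
  assumes h_mono: "strict_mono_on {0..1} h"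
    and h_cont: "continuous_on {0..1} h"
begin

lemma h_zero_less_one: "h 0 < h 1"
  using strict_mono_on_less[OF h_mono] by simp

lemma the_inv_into_zero: "the_inv_into {0..1} h (h 0) = 0"
  using the_inv_into_f_f[OF strict_mono_on_imp_inj_on[OF h_mono]] by simp

lemma the_inv_into_omega_mem: "the_inv_into {0..1} h (omega h s) \<in> {0..1}"
  using the_inv_into_Icc_mem[OF zero_le_one h_mono h_cont] omega_mem h_zero_less_one
  by simp

lemma the_inv_into_omega_pos:
  assumes "h 0 < s"
  shows "0 < the_inv_into {0..1} h (omega h s)"
proof -
  have "omega h s \<in> {h 0..h 1}" "h 0 < omega h s"
    using assms h_zero_less_one by (auto simp: omega_def)
  then have "the_inv_into {0..1} h (h 0) < the_inv_into {0..1} h (omega h s)"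
    using h_zero_less_one
    by (intro strict_mono_onD[OF strict_mono_on_the_inv_into_Icc[OF zero_le_one h_mono h_cont]]) auto
  then show ?thesis by (simp add: the_inv_into_zero)
qed

lemma Vfun_ge_the_inv_into:
  "\<phi> x \<in> {h 0..h 1} \<Longrightarrow> ereal (the_inv_into {0..1} h (\<phi> x)) \<le> Vfun h \<beta> T \<phi> x"
  using Vfun_ge_term[of \<beta> 0 h \<phi> T x] by (simp add: omega_eq_self)

lemma Vfun_nonneg: "0 \<le> Vfun h \<beta> T \<phi> x"
proof -
  have "0 \<le> ereal (the_inv_into {0..1} h (omega h (\<phi> x)))"
    using the_inv_into_omega_mem[of "\<phi> x"] by simp
  also have "\<dots> \<le> Vfun h \<beta> T \<phi> x"
    using Vfun_ge_term[of \<beta> 0 h \<phi> T x] by simp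
  finally show ?thesis .
qed

lemma Vfun_pos:
  assumes "0 < \<beta>" and "h 0 < \<phi> ((T ^^ k) x)"
  shows "0 < Vfun h \<beta> T \<phi> x"
proof -
  have "0 < inverse (\<beta> ^ k) * the_inv_into {0..1} h (omega h (\<phi> ((T ^^ k) x)))"
    using assms by (simp add: the_inv_into_omega_pos)
  then have "0 < ereal (inverse (\<beta> ^ k) * the_inv_into {0..1} h (omega h (\<phi> ((T ^^ k) x))))"
    by simp
  also have "\<dots> \<le> Vfun h \<beta> T \<phi> x"
    by (rule Vfun_ge_term)
  finally show ?thesis .
qed

lemma Vfun_le_one:
  assumes "0 < \<beta>" "\<beta> \<le> 1" and below: "\<And>k. \<phi> ((T ^^ k) x) \<le> h (\<beta> ^ k)"
  shows "Vfun h \<beta> T \<phi> x \<le> 1"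
  unfolding Vfun_def
proof (rule SUP_least)
  fix k :: nat
  have pow: "\<beta> ^ k \<in> {0..1}" using assms by (simp add: power_le_one)
  then have "h (\<beta> ^ k) \<in> {h 0..h 1}"
    using strict_mono_on_leD[OF h_mono, of 0 "\<beta> ^ k"] strict_mono_on_leD[OF h_mono, of "\<beta> ^ k" 1]
    by auto
  moreover have "omega h (\<phi> ((T ^^ k) x)) \<le> h (\<beta> ^ k)"
    using below[of k] calculation by (auto simp: omega_def)
  ultimately have "the_inv_into {0..1} h (omega h (\<phi> ((T ^^ k) x)))
      \<le> the_inv_into {0..1} h (h (\<beta> ^ k))"
    using omega_mem[OF less_imp_le[OF h_zero_less_one]]
    by (intro strict_mono_on_leD[OF strict_mono_on_the_inv_into_Icc[OF zero_le_one h_mono h_cont]])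
  also have "\<dots> = \<beta> ^ k"
    using the_inv_into_f_f[OF strict_mono_on_imp_inj_on[OF h_mono] pow] .
  finally have "inverse (\<beta> ^ k) * the_inv_into {0..1} h (omega h (\<phi> ((T ^^ k) x)))
      \<le> inverse (\<beta> ^ k) * \<beta> ^ k"
    using assms(1) by (intro mult_left_mono) auto
  then show "ereal (inverse (\<beta> ^ k) * the_inv_into {0..1} h (omega h (\<phi> ((T ^^ k) x)))) \<le> 1"
    using assms(1) by simp
qed

lemma opt_lyapunov_Vfun:
  assumes beta: "0 < \<beta>" "\<beta> < 1"
    and below: "\<And>k x. x \<in> X \<Longrightarrow> \<phi> ((T ^^ k) x) \<le> h (\<beta> ^ k)"
    and x0: "x0 \<in> X" "h 0 < \<phi> ((T ^^ k0) x0)"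
  shows "opt_lyapunov X T (Vfun h \<beta> T \<phi>)"
  unfolding opt_lyapunov_def
proof (intro conjI)
  show "\<forall>x. 0 \<le> Vfun h \<beta> T \<phi> x"
    using Vfun_nonneg by blast
  show "0 < (SUP x\<in>X. Vfun h \<beta> T \<phi> x)"
    using Vfun_pos[where k = k0 and \<phi> = \<phi> and T = T, OF beta(1) x0(2)] SUP_upper[OF x0(1)]
    by (rule order.strict_trans2)
  show "(SUP x\<in>X. Vfun h \<beta> T \<phi> x) \<le> 1"
    using Vfun_le_one[OF beta(1) less_imp_le[OF beta(2)] below] by (rule SUP_least)
  show "\<exists>lam. 0 < lam \<and> lam < 1 \<and> (\<forall>x. Vfun h \<beta> T \<phi> (T x) \<le> ereal lam * Vfun h \<beta> T \<phi> x)"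
    using Vfun_comp_le beta by blast
qed

lemma mem_Ggt_if_nu_gt:
  assumes "0 < \<beta>" "\<beta> < 1" and nu_le: "\<And>k. nu X T \<phi> k \<le> h (\<beta> ^ k)"
    and "h 0 < nu X T \<phi> k"
  shows "k \<in> Ggt X T \<phi>"
proof -
  have "(\<lambda>n. h (\<beta> ^ n)) \<longlonglongrightarrow> h 0"
    using continuous_on_tendsto_compose[OF h_cont LIMSEQ_power_zero[of \<beta>]] assms(1,2)
    by (auto simp: power_le_one)
  then have "limsup (\<lambda>n. ereal (nu X T \<phi> n)) \<le> ereal (h 0)"
    by (rule limsup_le_of_le_tendsto[OF nu_le])
  with assms(4) show ?thesis
    unfolding Ggt_def by (auto intro: order.strict_trans1)
qed

context
  fixes \<alpha> :: "real \<Rightarrow> real"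
  assumes \<alpha>_below: "\<And>s. s \<le> h 0 \<Longrightarrow> \<alpha> s = s - h 0"
    and \<alpha>_between: "\<And>s. h 0 < s \<and> s \<le> h 1 \<Longrightarrow> \<alpha> s = the_inv_into {0..1} h s"
begin

lemma \<alpha>_eq_the_inv_into: "s \<in> {h 0..h 1} \<Longrightarrow> \<alpha> s = the_inv_into {0..1} h s"
  using \<alpha>_below[of "h 0"] \<alpha>_between[of s] the_inv_into_zero by (cases "s = h 0") auto

lemma image_\<alpha>: "\<alpha> ` {h 0..h 1} = {0..1}"
proof -
  have "\<alpha> ` {h 0..h 1} = the_inv_into {0..1} h ` (h ` {0..1})"
    using \<alpha>_eq_the_inv_into
    by (simp add: strict_mono_continuous_image_Icc[OF zero_le_one h_mono h_cont])
  then show ?thesis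
    using strict_mono_on_imp_inj_on[OF h_mono] by simp
qed

lemma continuous_on_\<alpha>: "continuous_on {..h 1} \<alpha>"
proof -
  have "{..h 1} = {..h 0} \<union> {h 0..h 1}"
    using h_zero_less_one by auto
  moreover have "continuous_on {..h 0} \<alpha>"
    by (rule continuous_on_eq[of _ "\<lambda>s. s - h 0"]) (auto intro!: continuous_intros simp: \<alpha>_below)
  moreover have "continuous_on {h 0..h 1} \<alpha>"
    by (rule continuous_on_eq[OF continuous_on_the_inv_into_Icc[OF zero_le_one h_mono h_cont]])
      (simp add: \<alpha>_eq_the_inv_into)
  ultimately show ?thesis
    by (metis closed_atMost closed_atLeastAtMost continuous_on_closed_Un)
qed

lemma strict_mono_on_\<alpha>: "strict_mono_on {..h 1} \<alpha>"
proof (rule strict_mono_onI)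
  fix r s assume "r \<in> {..h 1}" "s \<in> {..h 1}" "r < s"
  then consider "s \<le> h 0" | "r \<le> h 0" "h 0 < s" | "r \<in> {h 0..h 1}" "s \<in> {h 0..h 1}"
    by fastforce
  then show "\<alpha> r < \<alpha> s"
  proof cases
    case 1
    with \<open>r < s\<close> show ?thesis by (simp add: \<alpha>_below)
  next
    case 2
    then have "\<alpha> r \<le> 0" "0 < \<alpha> s"
      using \<open>s \<in> {..h 1}\<close> \<alpha>_below[of r] \<alpha>_between[of s] the_inv_into_omega_pos[of s]
      by (auto simp: omega_eq_self)
    then show ?thesis by linarith
  next
    case 3
    with \<open>r < s\<close> show ?thesis
      using strict_mono_onD[OF strict_mono_on_the_inv_into_Icc[OF zero_le_one h_mono h_cont]]
      by (simp add: \<alpha>_eq_the_inv_into)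
  qed
qed

lemma certificate_Vfun:
  assumes below_h1: "\<And>k x. x \<in> X \<Longrightarrow> \<phi> ((T ^^ k) x) \<le> h 1"
    and k: "k \<in> Ggt X T \<phi>" "nu X T \<phi> k \<in> {h 0<..h 1}"
  shows "certificate X T \<phi> (Vfun h \<beta> T \<phi>) \<alpha>"
  unfolding certificate_def
proof (intro conjI allI impI bexI[OF _ k(1)])
  have "Iphi X T \<phi> \<subseteq> {..h 1}"
    using below_h1 by (rule Iphi_subset_atMost)
  then have hull: "convex hull (Iphi X T \<phi> \<union> {h 0..h 1}) \<subseteq> {..h 1}"
    by (intro hull_minimal) auto
  show "SC X T \<phi> \<alpha>"
    unfolding SC_def
    by (intro exI[of _ "{h 0..h 1}"] conjI is_interval_cc image_\<alpha>
        continuous_on_subset[OF continuous_on_\<alpha> hull] monotone_on_subset[OF strict_mono_on_\<alpha> hull])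
  show "0 < \<alpha> (nu X T \<phi> k)"
    using k(2) \<alpha>_between the_inv_into_omega_pos[of "nu X T \<phi> k"] by (simp add: omega_eq_self)
  fix j x assume "x \<in> X"
  show "ereal (\<alpha> (\<phi> ((T ^^ j) x))) \<le> Vfun h \<beta> T \<phi> ((T ^^ j) x)"
  proof (cases "\<phi> ((T ^^ j) x) \<le> h 0")
    case True
    then have "ereal (\<alpha> (\<phi> ((T ^^ j) x))) \<le> 0" by (simp add: \<alpha>_below)
    then show ?thesis using Vfun_nonneg order_trans by blast
  next
    case False
    then have "\<phi> ((T ^^ j) x) \<in> {h 0..h 1}"
      using below_h1[OF \<open>x \<in> X\<close>] by simp
    then show ?thesis
      using Vfun_ge_the_inv_into[of \<phi> "(T ^^ j) x"] by (simp add: \<alpha>_eq_the_inv_into)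
  qed
qed

end

end

theorem mainTheorem19:
  fixes X :: "(real^'n) set" and T :: "real^'n \<Rightarrow> real^'n" and \<phi> :: "real^'n \<Rightarrow> real"
    and h :: "real \<Rightarrow> real" and \<beta> :: real
  assumes X_ne: "X \<noteq> {}"
    and phi0: "\<phi> 0 = 0"
    and nu_finite: "\<And>k. bdd_above ((\<lambda>x. \<phi> ((T ^^ k) x)) ` X)"
    and h_mono: "strict_mono_on {0..1} h"
    and h_cont: "continuous_on {0..1} h"
    and beta: "0 < \<beta>" "\<beta> < 1"
    and nu_le: "\<And>k. nu X T \<phi> k \<le> h (\<beta> ^ k)"
    and nu_gt: "{k. nu X T \<phi> k > h 0} \<noteq> {}"
  shows "opt_lyapunov X T (Vfun h \<beta> T \<phi>)
    \<and> (\<forall>x. Vfun h \<beta> T \<phi> (T x) \<le> ereal \<beta> * Vfun h \<beta> T \<phi> x)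
    \<and> (\<forall>hh::real \<Rightarrow> real.
          (\<forall>s. s \<le> h 0 \<longrightarrow> hh s = s - h 0) \<and>
          (\<forall>s. h 0 < s \<and> s \<le> h 1 \<longrightarrow> hh s = the_inv_into {0..1} h s)
          \<longrightarrow> certificate X T \<phi> (Vfun h \<beta> T \<phi>) hh)
    \<and> compatible X T \<phi> (Vfun h \<beta> T \<phi>)"
proof -
  have h_pow_le: "\<And>k. h (\<beta> ^ k) \<le> h 1"
    using strict_mono_on_leD[OF h_mono] beta by (simp add: power_le_one)
  have phi_le_h: "\<And>k x. x \<in> X \<Longrightarrow> \<phi> ((T ^^ k) x) \<le> h (\<beta> ^ k)"
    using orbit_value_le_nu[OF nu_finite] nu_le by (rule order_trans)
  obtain k0 where k0: "h 0 < nu X T \<phi> k0"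
    using nu_gt by auto
  then have k0_Ggt: "k0 \<in> Ggt X T \<phi>"
    using mem_Ggt_if_nu_gt[OF h_mono h_cont beta nu_le] by blast
  obtain x0 where x0: "x0 \<in> X" "h 0 < \<phi> ((T ^^ k0) x0)"
    using k0 less_cSUP_iff[OF X_ne nu_finite] unfolding nu_def by blast
  have certificates: "certificate X T \<phi> (Vfun h \<beta> T \<phi>) \<alpha>"
    if "(\<forall>s. s \<le> h 0 \<longrightarrow> \<alpha> s = s - h 0) \<and>
        (\<forall>s. h 0 < s \<and> s \<le> h 1 \<longrightarrow> \<alpha> s = the_inv_into {0..1} h s)" for \<alpha>
    using that k0 order_trans[OF nu_le h_pow_le] order_trans[OF phi_le_h h_pow_le]
    by (intro certificate_Vfun[OF h_mono h_cont _ _ _ k0_Ggt]) auto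
  have "compatible X T \<phi> (Vfun h \<beta> T \<phi>)"
    using certificates[of "\<lambda>s. if s \<le> h 0 then s - h 0 else the_inv_into {0..1} h s"]
    by (intro certificate_imp_compatible[OF X_ne nu_finite]) simp
  then show ?thesis
    using opt_lyapunov_Vfun[OF h_mono h_cont beta phi_le_h x0] Vfun_comp_le[OF beta(1)] certificates
    by blast
qed

end
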